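(* Let $\Gamma=(V,E)$ be a simple connected graph of order $n$ and maximum degree $\Delta$, and let $\mu$ be the algebraic connectivity of $\Gamma$. Then the strong defensive alliance number of $\Gamma$ satisfies $$\hat{a}(\Gamma)\ge \left\lceil\frac{n\left(\mu-\left\lfloor\frac{\Delta}{2}\right\rfloor\right)}{\mu}\right\rceil.$$
   Context: For $S\subseteq V$ and $v\in V$, $N_S(v)=\{u\in S: u\sim v\}$ and $N_{V\setminus S}(v)=\{u\in V\setminus S: u\sim v\}$. A nonempty set $S\subseteq V$ is a strong defensive alliance if $|N_S(v)|\ge |N_{V\setminus S}(v)|$ for every $v\in S$. $\hat a(\Gamma)$ is the minimum cardinality of a strong defensive alliance in $\Gamma$. The algebraic connectivity is the second smallest eigenvalue of the Laplacian matrix of $\Gamma$. *)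

theory Defs
  imports "Jordan_Normal_Form.Char_Poly"
begin

definition simple_graph :: "nat \<Rightarrow> (nat \<Rightarrow> nat \<Rightarrow> bool) \<Rightarrow> bool" where
  "simple_graph n adj \<longleftrightarrow>
     (\<forall>u v. adj u v \<longrightarrow> u < n \<and> v < n) \<and>
     (\<forall>u v. adj u v \<longrightarrow> adj v u) \<and>
     (\<forall>u. \<not> adj u u)"

definition connected_graph :: "nat \<Rightarrow> (nat \<Rightarrow> nat \<Rightarrow> bool) \<Rightarrow> bool" where
  "connected_graph n adj \<longleftrightarrow> (\<forall>u<n. \<forall>v<n. adj\<^sup>*\<^sup>* u v)"

definition degree :: "nat \<Rightarrow> (nat \<Rightarrow> nat \<Rightarrow> bool) \<Rightarrow> nat \<Rightarrow> nat" where
  "degree n adj v = card {u. u < n \<and> adj v u}"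

definition max_degree :: "nat \<Rightarrow> (nat \<Rightarrow> nat \<Rightarrow> bool) \<Rightarrow> nat" where
  "max_degree n adj = Max (degree n adj ` {0..<n})"

definition laplacian :: "nat \<Rightarrow> (nat \<Rightarrow> nat \<Rightarrow> bool) \<Rightarrow> real mat" where
  "laplacian n adj = mat n n (\<lambda>(i, j).
     if i = j then real (degree n adj i) else if adj i j then -1 else 0)"

text \<open>The eigenvalues of a real matrix whose characteristic polynomial splits over
  the reals (e.g. a real symmetric matrix), listed in nondecreasing order with
  multiplicity.\<close>
definition sorted_eigenvalues :: "real mat \<Rightarrow> real list" where
  "sorted_eigenvalues A = (THE xs. sorted xs \<and> char_poly A = (\<Prod>a\<leftarrow>xs. [:- a, 1:]))"

definition algebraic_connectivity :: "nat \<Rightarrow> (nat \<Rightarrow> nat \<Rightarrow> bool) \<Rightarrow> real" where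
  "algebraic_connectivity n adj = sorted_eigenvalues (laplacian n adj) ! 1"

definition strong_defensive_alliance :: "nat \<Rightarrow> (nat \<Rightarrow> nat \<Rightarrow> bool) \<Rightarrow> nat set \<Rightarrow> bool" where
  "strong_defensive_alliance n adj S \<longleftrightarrow>
     S \<noteq> {} \<and> S \<subseteq> {0..<n} \<and>
     (\<forall>v\<in>S. card {u\<in>S. adj u v} \<ge> card {u\<in>{0..<n} - S. adj u v})"

definition strong_defensive_alliance_number :: "nat \<Rightarrow> (nat \<Rightarrow> nat \<Rightarrow> bool) \<Rightarrow> nat" where
  "strong_defensive_alliance_number n adj =
     Min {card S | S. strong_defensive_alliance n adj S}"

end

theory Submission
  imports Defs Berlekamp_Zassenhaus.Mahler_Measure
begin

text \<open>
  In a strong defensive alliance \<open>S\<close> every vertex has at most \<open>\<lfloor>\<Delta>/2\<rfloor>\<close> neighbours outside \<open>S\<close>,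
  so at most \<open>|S| \<lfloor>\<Delta>/2\<rfloor>\<close> edges leave \<open>S\<close>. The vector \<open>x = n \<one>\<^sub>S - |S| \<one>\<close> sums to zero,
  has squared norm \<open>|S| (n - |S|) n\<close> and Laplacian form \<open>n\<^sup>2 e(S, V - S)\<close>. The algebraic
  connectivity \<open>\<mu>\<close> is a lower bound for the Rayleigh quotient of every vector summing to zero,
  hence \<open>\<mu> (n - |S|) \<le> n \<lfloor>\<Delta>/2\<rfloor>\<close>, which rearranges to the claim. That lower bound is read off
  an orthonormal eigenbasis of the Laplacian, supplied by the spectral theorem for real symmetric
  matrices, which is proved by deflation with Householder reflections.
\<close>

section \<open>Householder reflections\<close>

definition reflection_mat :: "real vec \<Rightarrow> real mat" where
  "reflection_mat w = mat (dim_vec w) (dim_vec w)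
     (\<lambda>(i, j). (if i = j then 1 else 0) - 2 / (w \<bullet> w) * (w $ i * w $ j))"

lemma dim_reflection_mat [simp]:
  "dim_row (reflection_mat w) = dim_vec w" "dim_col (reflection_mat w) = dim_vec w"
  by (simp_all add: reflection_mat_def)

lemma reflection_mat_carrier [simp]:
  "reflection_mat w \<in> carrier_mat (dim_vec w) (dim_vec w)"
  by (simp add: carrier_matI)

lemma transpose_reflection_mat [simp]: "transpose_mat (reflection_mat w) = reflection_mat w"
  by (rule eq_matI) (auto simp: reflection_mat_def)

lemma reflection_mat_mult_vec:
  assumes x: "x \<in> carrier_vec (dim_vec w)"
  shows "reflection_mat w *\<^sub>v x = x - (2 / (w \<bullet> w) * (w \<bullet> x)) \<cdot>\<^sub>v w"
proof (rule eq_vecI)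
  fix i assume "i < dim_vec (x - (2 / (w \<bullet> w) * (w \<bullet> x)) \<cdot>\<^sub>v w)"
  then have i: "i < dim_vec w" using x by simp
  have "(reflection_mat w *\<^sub>v x) $ i = row (reflection_mat w) i \<bullet> x"
    using i by simp
  also have "row (reflection_mat w) i = unit_vec (dim_vec w) i - (2 / (w \<bullet> w) * w $ i) \<cdot>\<^sub>v w"
    using i by (intro eq_vecI) (auto simp: reflection_mat_def)
  also have "\<dots> \<bullet> x = x $ i - 2 / (w \<bullet> w) * w $ i * (w \<bullet> x)"
    using i x by (subst minus_scalar_prod_distrib[of _ "dim_vec w"]) auto
  finally show "(reflection_mat w *\<^sub>v x) $ i = (x - (2 / (w \<bullet> w) * (w \<bullet> x)) \<cdot>\<^sub>v w) $ i"
    using i x by simp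
qed (use x in simp)

lemma reflection_mat_involutive:
  assumes x: "x \<in> carrier_vec (dim_vec w)"
  shows "reflection_mat w *\<^sub>v (reflection_mat w *\<^sub>v x) = x"
proof (cases "w \<bullet> w = 0")
  case True
  then have "reflection_mat w *\<^sub>v y = y" if "y \<in> carrier_vec (dim_vec w)" for y
    using that by (intro eq_vecI) (auto simp: reflection_mat_mult_vec)
  then show ?thesis using x by simp
next
  case False
  have w: "w \<in> carrier_vec (dim_vec w)" by simp
  have "w \<bullet> (reflection_mat w *\<^sub>v x) = - (w \<bullet> x)"
    using False x by (simp add: reflection_mat_mult_vec scalar_prod_minus_distrib[OF w])
  then show ?thesis
    using x by (intro eq_vecI) (auto simp: reflection_mat_mult_vec)
qed

lemma reflection_mat_mult_self:
  "reflection_mat w * reflection_mat w = 1\<^sub>m (dim_vec w)"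
proof (rule mat_col_eqI)
  fix j assume "j < dim_col (1\<^sub>m (dim_vec w) :: real mat)"
  then have j: "j < dim_vec w" by simp
  have "col (reflection_mat w) j = reflection_mat w *\<^sub>v unit_vec (dim_vec w) j"
    using j by (intro eq_vecI) (auto simp: row_def)
  then show "col (reflection_mat w * reflection_mat w) j = col (1\<^sub>m (dim_vec w)) j"
    using j col_mult2[OF reflection_mat_carrier reflection_mat_carrier j]
    by (simp add: reflection_mat_involutive)
qed auto

lemma reflection_mat_unit_vec:
  assumes v: "v \<in> carrier_vec n" and unit: "v \<bullet> v = 1" and n: "0 < n"
  shows "reflection_mat (v - unit_vec n 0) *\<^sub>v unit_vec n 0 = v"
proof -
  define w where "w = v - unit_vec n 0"
  have w: "w \<in> carrier_vec n" using v by (simp add: w_def)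
  have we: "w \<bullet> unit_vec n 0 = v $ 0 - 1"
    using v n by (simp add: w_def)
  have ww: "w \<bullet> w = 2 - 2 * v $ 0"
    using v n unit by (simp add: w_def minus_scalar_prod_distrib[of _ n] scalar_prod_minus_distrib[of _ n])
  show ?thesis
  proof (cases "v $ 0 = 1")
    case True
    then have w0: "w = 0\<^sub>v n" using ww conjugate_square_eq_0_vec[OF w] by simp
    have "v $ i = unit_vec n 0 $ i" if "i < n" for i
      using arg_cong[OF w0, of "\<lambda>u. u $ i"] v that by (simp add: w_def)
    then show ?thesis using v w0
      by (intro eq_vecI) (auto simp: w_def[symmetric] reflection_mat_mult_vec)
  next
    case False
    then have "2 / (w \<bullet> w) * (w \<bullet> unit_vec n 0) = -1" by (simp add: we ww field_simps)
    then show ?thesis using v w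
      by (simp add: w_def[symmetric] reflection_mat_mult_vec) (auto simp: w_def)
  qed
qed

section \<open>Spectral theorem for real symmetric matrices\<close>

lemma conjugate_of_real_mat_mult_vec:
  fixes A :: "real mat" and v :: "complex vec"
  assumes A: "A \<in> carrier_mat n n" and v: "v \<in> carrier_vec n"
  shows "conjugate (map_mat complex_of_real A *\<^sub>v v) = map_mat complex_of_real A *\<^sub>v conjugate v"
  using A v by (intro eq_vecI) (auto simp: scalar_prod_def cnj_sum)

lemma eigenvalue_of_real_symmetric_in_Reals:
  fixes A :: "real mat"
  assumes A: "A \<in> carrier_mat n n" and sym: "transpose_mat A = A"
    and ev: "eigenvalue (map_mat complex_of_real A) c"
  shows "c \<in> \<real>"
proof -
  let ?A = "map_mat complex_of_real A"
  have A': "?A \<in> carrier_mat n n" and sym': "transpose_mat ?A = ?A"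
    using A sym by (auto simp: map_mat_transpose)
  obtain v where v: "v \<in> carrier_vec n" "v \<noteq> 0\<^sub>v n" and Av: "?A *\<^sub>v v = c \<cdot>\<^sub>v v"
    using ev A unfolding eigenvalue_def eigenvector_def by auto
  have "c * (v \<bullet>c v) = (?A *\<^sub>v v) \<bullet>c v"
    using v by (simp add: Av)
  also have "\<dots> = v \<bullet> (?A *\<^sub>v conjugate v)"
    using transpose_vec_mult_scalar[OF A', of "conjugate v" v] v by (simp add: sym')
  also have "\<dots> = v \<bullet> conjugate (c \<cdot>\<^sub>v v)"
    by (simp add: conjugate_of_real_mat_mult_vec[OF A v(1), symmetric] Av)
  also have "\<dots> = cnj c * (v \<bullet>c v)"
    using v by (simp add: conjugate_smult_vec)
  finally have "cnj c = c"
    using conjugate_square_eq_0_vec[OF v(1)] v(2) by simp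
  then show ?thesis by (simp add: Reals_cnj_iff)
qed

lemma symmetric_real_mat_has_eigenvalue:
  fixes A :: "real mat"
  assumes A: "A \<in> carrier_mat n n" and sym: "transpose_mat A = A" and n: "0 < n"
  shows "\<exists>e. eigenvalue A e"
proof -
  let ?A = "map_mat complex_of_real A"
  have A': "?A \<in> carrier_mat n n" using A by simp
  obtain cs where cp: "char_poly ?A = (\<Prod>c\<leftarrow>cs. [:- c, 1:])" and "length cs = n"
    using char_poly_factorized[OF A'] by blast
  then obtain c where "c \<in> set cs" using n by (cases cs) auto
  then have "eigenvalue ?A c"
    by (simp add: eigenvalue_root_char_poly[OF A'] cp poly_prod_list_zero_iff)
  then obtain r where "c = complex_of_real r" and "eigenvalue ?A c"
    using eigenvalue_of_real_symmetric_in_Reals[OF A sym] by (auto elim: Reals_cases)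
  then have "complex_of_real (poly (char_poly A) r) = 0"
    by (simp add: of_real_hom.char_poly_hom[OF A] eigenvalue_root_char_poly[OF A'])
  then show ?thesis
    by (auto simp: eigenvalue_root_char_poly[OF A])
qed

lemma char_poly_dim_0: "A \<in> carrier_mat 0 0 \<Longrightarrow> char_poly A = 1"
  using degree_monic_char_poly[of A 0] by (auto elim!: degree_eq_zeroE)

lemma symmetric_real_mat_least_eigenvalue:
  fixes A :: "real mat"
  assumes A: "A \<in> carrier_mat n n" and sym: "transpose_mat A = A" and n: "0 < n"
  obtains e where "eigenvalue A e" and "\<And>x. poly (char_poly A) x = 0 \<Longrightarrow> e \<le> x"
proof -
  define R where "R = {x. poly (char_poly A) x = 0}"
  have "char_poly A \<noteq> 0" using degree_monic_char_poly[OF A] by auto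
  then have "finite R" by (simp add: R_def poly_roots_finite)
  moreover have "R \<noteq> {}"
    using symmetric_real_mat_has_eigenvalue[OF A sym n] by (auto simp: R_def eigenvalue_root_char_poly[OF A])
  ultimately have "Min R \<in> R" and "\<And>x. x \<in> R \<Longrightarrow> Min R \<le> x" by auto
  then show ?thesis
    using that[of "Min R"] by (simp add: R_def eigenvalue_root_char_poly[OF A])
qed

lemma unit_eigenvector_exists:
  fixes A :: "real mat"
  assumes A: "A \<in> carrier_mat n n" and "eigenvalue A e"
  obtains v where "v \<in> carrier_vec n" and "v \<bullet> v = 1" and "A *\<^sub>v v = e \<cdot>\<^sub>v v"
proof -
  obtain u where u: "u \<in> carrier_vec n" "u \<noteq> 0\<^sub>v n" and Au: "A *\<^sub>v u = e \<cdot>\<^sub>v u"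
    using assms unfolding eigenvalue_def eigenvector_def by auto
  have pos: "u \<bullet> u > 0" using conjugate_square_greater_0_vec[OF u(1)] u(2) by simp
  define v where "v = (1 / sqrt (u \<bullet> u)) \<cdot>\<^sub>v u"
  have "v \<bullet> v = (u \<bullet> u) / (sqrt (u \<bullet> u))\<^sup>2"
    by (simp add: v_def power2_eq_square)
  then have "v \<bullet> v = 1" using pos by simp
  moreover have "A *\<^sub>v v = e \<cdot>\<^sub>v v"
    using A u Au by (simp add: v_def mult_mat_vec smult_smult_assoc mult.commute)
  moreover have "v \<in> carrier_vec n" using u by (simp add: v_def)
  ultimately show ?thesis using that by blast
qed

definition orthonormal_mat :: "nat \<Rightarrow> real mat \<Rightarrow> bool" where
  "orthonormal_mat n P \<longleftrightarrow> P \<in> carrier_mat n n \<and> transpose_mat P * P = 1\<^sub>m n"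

lemma orthonormal_mat_right_inverse:
  "orthonormal_mat n P \<Longrightarrow> P * transpose_mat P = 1\<^sub>m n"
  using mat_mult_left_right_inverse[of "transpose_mat P" n P] by (simp add: orthonormal_mat_def)

lemma orthonormal_mat_mult:
  assumes P: "orthonormal_mat n P" and Q: "orthonormal_mat n Q"
  shows "orthonormal_mat n (P * Q)"
proof -
  have carr: "P \<in> carrier_mat n n" "Q \<in> carrier_mat n n"
    using P Q by (auto simp: orthonormal_mat_def)
  have Pt: "transpose_mat P \<in> carrier_mat n n" using carr by simp
  have "transpose_mat (P * Q) * (P * Q) = transpose_mat Q * (transpose_mat P * (P * Q))"
    using carr Pt by (simp add: transpose_mult[OF carr] assoc_mult_mat[of _ n n _ n _ n])
  also have "transpose_mat P * (P * Q) = (transpose_mat P * P) * Q"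
    using carr Pt by (simp add: assoc_mult_mat[of _ n n _ n _ n])
  also have "transpose_mat Q * (\<dots>) = 1\<^sub>m n"
    using P Q carr by (simp add: orthonormal_mat_def)
  finally show ?thesis using carr by (simp add: orthonormal_mat_def)
qed

lemma orthonormal_mat_conj_cancel:
  assumes H: "orthonormal_mat n H" and A: "A \<in> carrier_mat n n"
  shows "H * (transpose_mat H * A * H) * transpose_mat H = A"
proof -
  have Hc: "H \<in> carrier_mat n n" and Ht: "transpose_mat H \<in> carrier_mat n n"
    using H by (auto simp: orthonormal_mat_def)
  have "H * (transpose_mat H * A * H) * transpose_mat H
      = (H * transpose_mat H) * A * (H * transpose_mat H)"
    using Hc Ht A by (simp add: assoc_mult_mat[of _ n n _ n _ n])
  then show ?thesis
    using A by (simp add: orthonormal_mat_right_inverse[OF H])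
qed

lemma mult_mult_transpose_assoc:
  fixes H F D :: "real mat"
  assumes H: "H \<in> carrier_mat n n" and F: "F \<in> carrier_mat n n" and D: "D \<in> carrier_mat n n"
  shows "H * (F * D * transpose_mat F) * transpose_mat H = (H * F) * D * transpose_mat (H * F)"
proof -
  have Ht: "transpose_mat H \<in> carrier_mat n n" and Ft: "transpose_mat F \<in> carrier_mat n n"
    using H F by simp_all
  have FD: "F * D \<in> carrier_mat n n" and FDF: "F * D * transpose_mat F \<in> carrier_mat n n"
    and HF: "H * F \<in> carrier_mat n n" and HFD: "H * F * D \<in> carrier_mat n n"
    using H F D Ft by (auto intro!: mult_carrier_mat)
  show ?thesis
    using H F D Ht Ft FD FDF HF HFD
    by (simp add: transpose_mult[OF H F] assoc_mult_mat[of _ n n _ n _ n])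
qed

lemma orthonormal_reflection_mat: "orthonormal_mat (dim_vec w) (reflection_mat w)"
  by (simp add: orthonormal_mat_def reflection_mat_mult_self)

lemma orthonormal_mat_four_block:
  assumes "orthonormal_mat m P"
  shows "orthonormal_mat (Suc m) (four_block_mat (1\<^sub>m 1) (0\<^sub>m 1 m) (0\<^sub>m m 1) P)"
  using assms four_block_one_mat[of 1 m]
  by (auto simp: orthonormal_mat_def transpose_four_block_mat[of _ 1 1 _ m _ m]
      mult_four_block_mat[of _ 1 1 _ m _ m _ _ 1 _ m])

lemma symmetric_mat_four_block_of_unit_eigenvector:
  fixes A :: "'a :: comm_ring_1 mat"
  assumes A: "A \<in> carrier_mat (Suc m) (Suc m)" and sym: "transpose_mat A = A"
    and Ae0: "A *\<^sub>v unit_vec (Suc m) 0 = e \<cdot>\<^sub>v unit_vec (Suc m) 0"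
  shows "A = four_block_mat (mat 1 1 (\<lambda>_. e)) (0\<^sub>m 1 m) (0\<^sub>m m 1)
    (mat m m (\<lambda>(i, j). A $$ (Suc i, Suc j)))"
proof -
  have col0: "A $$ (i, 0) = (if i = 0 then e else 0)" if "i < Suc m" for i
  proof -
    have "A $$ (i, 0) = (A *\<^sub>v unit_vec (Suc m) 0) $ i" using A that by simp
    then show ?thesis using Ae0 that by simp
  qed
  have row0: "A $$ (0, j) = (if j = 0 then e else 0)" if "j < Suc m" for j
    using col0[OF that] arg_cong[OF sym, of "\<lambda>M. M $$ (j, 0)"] that A by simp
  show ?thesis
    using A col0 row0 by (intro eq_matI) (auto split: nat.splits)
qed

lemma symmetric_real_mat_deflation:
  fixes A :: "real mat"
  assumes A: "A \<in> carrier_mat (Suc m) (Suc m)" and sym: "transpose_mat A = A"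
    and v: "v \<in> carrier_vec (Suc m)" "v \<bullet> v = 1" and Av: "A *\<^sub>v v = e \<cdot>\<^sub>v v"
  obtains H B where "orthonormal_mat (Suc m) H" and "B \<in> carrier_mat m m" and "transpose_mat B = B"
    and "transpose_mat H * A * H = four_block_mat (mat 1 1 (\<lambda>_. e)) (0\<^sub>m 1 m) (0\<^sub>m m 1) B"
proof -
  let ?e0 = "unit_vec (Suc m) 0"
  define H where "H = reflection_mat (v - ?e0)"
  have H: "H \<in> carrier_mat (Suc m) (Suc m)" "transpose_mat H = H" "H * H = 1\<^sub>m (Suc m)"
    and orth: "orthonormal_mat (Suc m) H"
    using v orthonormal_reflection_mat[of "v - ?e0"]
    by (simp_all add: H_def reflection_mat_mult_self carrier_matI)
  have He0: "H *\<^sub>v ?e0 = v"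
    unfolding H_def by (rule reflection_mat_unit_vec[OF v]) simp
  have Hv: "H *\<^sub>v v = ?e0"
    using H(1,3) by (simp flip: He0 assoc_mult_mat_vec[of H _ _ H])
  define A' where "A' = H * A * H"
  have A': "A' \<in> carrier_mat (Suc m) (Suc m)" and sym': "transpose_mat A' = A'"
    using A H sym by (auto simp: A'_def transpose_mult[of _ "Suc m" "Suc m" _ "Suc m"])
  have "A' *\<^sub>v ?e0 = H *\<^sub>v (A *\<^sub>v (H *\<^sub>v ?e0))"
    using A H(1) by (simp add: A'_def assoc_mult_mat_vec[of _ "Suc m" "Suc m" _ "Suc m"] del: assoc_mult_mat)
  also have "\<dots> = e \<cdot>\<^sub>v ?e0"
    using H(1) v(1) by (simp add: He0 Av Hv mult_mat_vec)
  finally have blocks: "A' = four_block_mat (mat 1 1 (\<lambda>_. e)) (0\<^sub>m 1 m) (0\<^sub>m m 1)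
      (mat m m (\<lambda>(i, j). A' $$ (Suc i, Suc j)))"
    by (rule symmetric_mat_four_block_of_unit_eigenvector[OF A' sym'])
  define B where "B = mat m m (\<lambda>(i, j). A' $$ (Suc i, Suc j))"
  have "transpose_mat B = B"
  proof (rule eq_matI)
    fix i j assume "i < dim_row B" "j < dim_col B"
    then show "transpose_mat B $$ (i, j) = B $$ (i, j)"
      using A' arg_cong[OF sym', of "\<lambda>M. M $$ (Suc i, Suc j)"] by (simp add: B_def)
  qed (simp_all add: B_def)
  then show ?thesis
    using that[of H B] orth blocks H(2) by (simp add: A'_def B_def)
qed

lemma char_poly_deflation:
  fixes A H B :: "real mat"
  assumes H: "orthonormal_mat (Suc m) H" and A: "A \<in> carrier_mat (Suc m) (Suc m)"
    and B: "B \<in> carrier_mat m m"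
    and HAH: "transpose_mat H * A * H = four_block_mat (mat 1 1 (\<lambda>_. e)) (0\<^sub>m 1 m) (0\<^sub>m m 1) B"
  shows "char_poly A = [:- e, 1:] * char_poly B"
proof -
  have "similar_mat A (transpose_mat H * A * H)"
    using A H orthonormal_mat_right_inverse[OF H] orthonormal_mat_conj_cancel[OF H A]
    by (intro similar_matI[where n = "Suc m" and P = H and Q = "transpose_mat H"])
      (auto simp: orthonormal_mat_def)
  then have "char_poly A = char_poly (mat 1 1 (\<lambda>_. e)) * char_poly B"
    using char_poly_four_block_zeros_col[OF mat_carrier zero_carrier_mat B]
    by (simp add: HAH char_poly_similar)
  also have "char_poly (mat 1 1 (\<lambda>_. e)) = [:- e, 1:]"
    by (simp add: char_poly_defs det_def sign_def)
  finally show ?thesis .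
qed

lemma four_block_diagonalization:
  fixes P :: "real mat"
  assumes P: "P \<in> carrier_mat m m" and B: "B = P * mat_diag m ((!) es) * transpose_mat P"
  shows "four_block_mat (mat 1 1 (\<lambda>_. e)) (0\<^sub>m 1 m) (0\<^sub>m m 1) B
    = four_block_mat (1\<^sub>m 1) (0\<^sub>m 1 m) (0\<^sub>m m 1) P * mat_diag (Suc m) ((!) (e # es))
      * transpose_mat (four_block_mat (1\<^sub>m 1) (0\<^sub>m 1 m) (0\<^sub>m m 1) P)"
proof -
  let ?F = "four_block_mat (1\<^sub>m 1) (0\<^sub>m 1 m) (0\<^sub>m m 1) P"
  let ?blk = "four_block_mat (mat 1 1 (\<lambda>_. e)) (0\<^sub>m 1 m) (0\<^sub>m m 1)"
  have PD: "P * mat_diag m ((!) es) \<in> carrier_mat m m"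
    and PDP: "P * mat_diag m ((!) es) * transpose_mat P \<in> carrier_mat m m"
    using P by (auto intro!: mult_carrier_mat)
  have "?F * mat_diag (Suc m) ((!) (e # es)) = ?F * ?blk (mat_diag m ((!) es))"
    by (intro arg_cong[where f = "(*) ?F"] eq_matI) (auto simp: mat_diag_def)
  also have "\<dots> = ?blk (P * mat_diag m ((!) es))"
    using P by (simp add: mult_four_block_mat[of _ 1 1 _ m _ m _ _ 1 _ m]
        left_mult_zero_mat[OF mat_diag_dim])
  also have "\<dots> * transpose_mat ?F = ?blk B"
    using P PD by (simp add: B transpose_four_block_mat[of _ 1 1 _ m _ m]
        mult_four_block_mat[of _ 1 1 _ m _ m _ _ 1 _ m] right_mult_zero_mat[OF PD]
        left_add_zero_mat[OF PDP])
  finally show ?thesis ..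
qed

theorem symmetric_real_mat_spectral_decomposition:
  fixes A :: "real mat"
  assumes "A \<in> carrier_mat n n" and "transpose_mat A = A"
  shows "\<exists>P es. orthonormal_mat n P \<and> length es = n \<and> sorted es \<and>
    char_poly A = (\<Prod>e\<leftarrow>es. [:- e, 1:]) \<and> A = P * mat_diag n ((!) es) * transpose_mat P"
  using assms
proof (induction n arbitrary: A)
  case 0
  then show ?case
    by (intro exI[of _ "1\<^sub>m 0"] exI[of _ "[]"])
      (auto simp: orthonormal_mat_def char_poly_dim_0 intro!: eq_matI)
next
  case (Suc m)
  have A: "A \<in> carrier_mat (Suc m) (Suc m)" by (rule Suc.prems(1))
  \<comment> \<open>Splitting off the least eigenvalue first keeps the eigenvalue list sorted.\<close>
  obtain e where e: "eigenvalue A e" and least: "\<And>x. poly (char_poly A) x = 0 \<Longrightarrow> e \<le> x"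
    using symmetric_real_mat_least_eigenvalue[OF Suc.prems] by blast
  obtain v where v: "v \<in> carrier_vec (Suc m)" "v \<bullet> v = 1" "A *\<^sub>v v = e \<cdot>\<^sub>v v"
    using unit_eigenvector_exists[OF A e] by blast
  let ?blk = "four_block_mat (mat 1 1 (\<lambda>_. e)) (0\<^sub>m 1 m) (0\<^sub>m m 1)"
  obtain H B where H: "orthonormal_mat (Suc m) H" and B: "B \<in> carrier_mat m m" "transpose_mat B = B"
    and HAH: "transpose_mat H * A * H = ?blk B"
    using symmetric_real_mat_deflation[OF A Suc.prems(2) v] by blast
  obtain Q es where Q: "orthonormal_mat m Q" and len: "length es = m" and sorted: "sorted es"
    and cpB: "char_poly B = (\<Prod>e\<leftarrow>es. [:- e, 1:])"
    and BQ: "B = Q * mat_diag m ((!) es) * transpose_mat Q"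
    using Suc.IH[OF B] by blast
  define F where "F = four_block_mat (1\<^sub>m 1) (0\<^sub>m 1 m) (0\<^sub>m m 1) Q"
  have Hc: "H \<in> carrier_mat (Suc m) (Suc m)" and F: "orthonormal_mat (Suc m) F"
    using H orthonormal_mat_four_block[OF Q] by (auto simp: orthonormal_mat_def F_def)
  have Fc: "F \<in> carrier_mat (Suc m) (Suc m)" using F by (simp add: orthonormal_mat_def)
  have "A = H * (transpose_mat H * A * H) * transpose_mat H"
    by (rule orthonormal_mat_conj_cancel[OF H A, symmetric])
  also have "\<dots> = H * (F * mat_diag (Suc m) ((!) (e # es)) * transpose_mat F) * transpose_mat H"
    unfolding HAH F_def using four_block_diagonalization[OF _ BQ] Q
    by (simp add: orthonormal_mat_def)
  also have "\<dots> = (H * F) * mat_diag (Suc m) ((!) (e # es)) * transpose_mat (H * F)"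
    by (rule mult_mult_transpose_assoc[OF Hc Fc mat_diag_dim])
  finally have decomp: "A = (H * F) * mat_diag (Suc m) ((!) (e # es)) * transpose_mat (H * F)" .
  have cp: "char_poly A = (\<Prod>x\<leftarrow>e # es. [:- x, 1:])"
    using char_poly_deflation[OF H A B(1) HAH] by (simp add: cpB)
  have "sorted (e # es)"
    using sorted least by (auto simp: cp poly_prod_list_zero_iff)
  then show ?case
    using orthonormal_mat_mult[OF H F] len cp decomp
    by (intro exI[of _ "H * F"] exI[of _ "e # es"]) simp
qed

lemma sorted_eigenvalues_eqI:
  assumes "sorted es" and "char_poly A = (\<Prod>e\<leftarrow>es. [:- e, 1:])"
  shows "sorted_eigenvalues A = es"
  unfolding sorted_eigenvalues_def
proof (rule the_equality)
  fix xs assume xs: "sorted xs \<and> char_poly A = (\<Prod>x\<leftarrow>xs. [:- x, 1:])"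
  then have "mset xs = mset es"
    using assms(2) reconstruct_poly_monic_defines_mset by metis
  then show "xs = es" using xs assms(1) by (metis properties_for_sort sorted_sort_id)
qed (use assms in simp)

lemma symmetric_real_mat_sorted_eigenvalues:
  fixes A :: "real mat"
  assumes "A \<in> carrier_mat n n" and "transpose_mat A = A"
  obtains P where "orthonormal_mat n P" and "length (sorted_eigenvalues A) = n"
    and "sorted (sorted_eigenvalues A)"
    and "A = P * mat_diag n ((!) (sorted_eigenvalues A)) * transpose_mat P"
  using symmetric_real_mat_spectral_decomposition[OF assms] sorted_eigenvalues_eqI by metis

lemma mat_diag_mult_vec_index:
  assumes "v \<in> carrier_vec n" and "i < n"
  shows "(mat_diag n d *\<^sub>v v) $ i = d i * v $ i"
  using assms by (simp add: mat_diag_def scalar_prod_def if_distrib[of "\<lambda>x. x * _"] cong: if_cong)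

lemma quadratic_form_diagonalization:
  fixes P :: "real mat"
  assumes P: "orthonormal_mat n P" and A: "A = P * mat_diag n d * transpose_mat P"
    and u: "u \<in> carrier_vec n"
  shows "u \<bullet> (A *\<^sub>v u) = (\<Sum>i<n. d i * ((transpose_mat P *\<^sub>v u) $ i)\<^sup>2)"
proof -
  let ?y = "transpose_mat P *\<^sub>v u"
  have Pc: "P \<in> carrier_mat n n" using P by (simp add: orthonormal_mat_def)
  have y: "?y \<in> carrier_vec n" using Pc u by simp
  have Dy: "mat_diag n d *\<^sub>v ?y \<in> carrier_vec n"
    using mult_mat_vec_carrier[OF mat_diag_dim y] .
  have "A *\<^sub>v u = P *\<^sub>v (mat_diag n d *\<^sub>v ?y)"
    using Pc u by (simp add: A assoc_mult_mat_vec[of _ n n _ n])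
  then have "u \<bullet> (A *\<^sub>v u) = ?y \<bullet> (mat_diag n d *\<^sub>v ?y)"
    using transpose_vec_mult_scalar[OF Pc Dy u] by simp
  also have "\<dots> = (\<Sum>i\<in>{0..<n}. ?y $ i * (mat_diag n d *\<^sub>v ?y) $ i)"
    unfolding scalar_prod_def by (simp only: carrier_vecD[OF Dy])
  also have "\<dots> = (\<Sum>i<n. d i * (?y $ i)\<^sup>2)"
    unfolding lessThan_atLeast0
    by (intro sum.cong) (auto simp: mat_diag_mult_vec_index[OF y] power2_eq_square simp del: index_mult_mat_vec)
  finally show ?thesis .
qed

lemma orthonormal_mat_norm:
  assumes P: "orthonormal_mat n P" and u: "u \<in> carrier_vec n"
  shows "u \<bullet> u = (\<Sum>i<n. ((transpose_mat P *\<^sub>v u) $ i)\<^sup>2)"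
proof -
  have Pc: "P \<in> carrier_mat n n" using P by (simp add: orthonormal_mat_def)
  have "1\<^sub>m n = P * mat_diag n (\<lambda>_. 1) * transpose_mat P"
    by (simp add: right_mult_one_mat[OF Pc] orthonormal_mat_right_inverse[OF P])
  from quadratic_form_diagonalization[OF P this u] show ?thesis
    using u by simp
qed

lemma diagonalization_entry_nonneg:
  fixes P :: "real mat"
  assumes P: "orthonormal_mat n P" and A: "A = P * mat_diag n d * transpose_mat P"
    and psd: "\<And>u. u \<in> carrier_vec n \<Longrightarrow> 0 \<le> u \<bullet> (A *\<^sub>v u)" and i: "i < n"
  shows "0 \<le> d i"
proof -
  have Pc: "P \<in> carrier_mat n n" using P by (simp add: orthonormal_mat_def)
  let ?u = "P *\<^sub>v unit_vec n i"
  have "transpose_mat P *\<^sub>v ?u = unit_vec n i"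
    using P Pc by (simp add: orthonormal_mat_def flip: assoc_mult_mat_vec[of _ n n _ n])
  then have "?u \<bullet> (A *\<^sub>v ?u) = (\<Sum>k<n. d k * (unit_vec n i $ k)\<^sup>2)"
    using quadratic_form_diagonalization[OF P A, of ?u] Pc by simp
  also have "\<dots> = (\<Sum>k<n. if k = i then d k else 0)"
    using i by (intro sum.cong) auto
  finally have "?u \<bullet> (A *\<^sub>v ?u) = d i" using i by simp
  then show ?thesis using psd[of ?u] Pc by simp
qed

lemma second_diagonal_entry_le_rayleigh:
  fixes P :: "real mat"
  assumes P: "orthonormal_mat n P" and A: "A = P * mat_diag n ((!) es) * transpose_mat P"
    and sorted: "sorted es" and len: "length es = n" and n: "1 < n"
    and u: "u \<in> carrier_vec n" and orth: "col P 0 \<bullet> u = 0"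
  shows "es ! 1 * (u \<bullet> u) \<le> u \<bullet> (A *\<^sub>v u)"
proof -
  let ?y = "transpose_mat P *\<^sub>v u"
  have Pc: "P \<in> carrier_mat n n" using P by (simp add: orthonormal_mat_def)
  have y0: "?y $ 0 = 0" using Pc u orth n by (simp add: row_transpose)
  have "es ! 1 * (u \<bullet> u) = (\<Sum>i<n. es ! 1 * (?y $ i)\<^sup>2)"
    by (simp add: orthonormal_mat_norm[OF P u] sum_distrib_left)
  also have "\<dots> \<le> (\<Sum>i<n. es ! i * (?y $ i)\<^sup>2)"
  proof (rule sum_mono)
    fix i assume "i \<in> {..<n}"
    then have "i = 0 \<or> es ! 1 \<le> es ! i"
      using sorted len by (auto intro: sorted_nth_mono)
    then show "es ! 1 * (?y $ i)\<^sup>2 \<le> es ! i * (?y $ i)\<^sup>2"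
      using y0 by (auto intro: mult_right_mono)
  qed
  also have "\<dots> = u \<bullet> (A *\<^sub>v u)"
    by (rule quadratic_form_diagonalization[OF P A u, symmetric])
  finally show ?thesis .
qed

section \<open>The Laplacian quadratic form\<close>

definition laplacian_form :: "nat \<Rightarrow> (nat \<Rightarrow> nat \<Rightarrow> bool) \<Rightarrow> (nat \<Rightarrow> real) \<Rightarrow> real" where
  "laplacian_form n adj f = (\<Sum>i<n. \<Sum>j<n. if adj i j then (f i - f j)\<^sup>2 else 0) / 2"

lemma laplacian_form_nonneg: "0 \<le> laplacian_form n adj f"
  unfolding laplacian_form_def by (intro divide_nonneg_nonneg sum_nonneg) auto

lemma laplacian_form_affine:
  "laplacian_form n adj (\<lambda>i. a + b * f i) = b\<^sup>2 * laplacian_form n adj f"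
  unfolding laplacian_form_def
  by (simp add: sum_distrib_left power2_eq_square algebra_simps
      if_distrib[of "\<lambda>y. b * (b * y)"] cong: if_cong)

lemma dim_laplacian [simp]:
  "dim_row (laplacian n adj) = n" "dim_col (laplacian n adj) = n"
  by (simp_all add: laplacian_def)

lemma laplacian_carrier [simp]: "laplacian n adj \<in> carrier_mat n n"
  by (simp add: carrier_matI)

lemma transpose_laplacian:
  "simple_graph n adj \<Longrightarrow> transpose_mat (laplacian n adj) = laplacian n adj"
  by (rule eq_matI) (auto simp: laplacian_def simple_graph_def)

lemma degree_eq_sum: "real (degree n adj i) = (\<Sum>j<n. if adj i j then 1 else 0)"
proof -
  have "{u. u < n \<and> adj i u} = {..<n} \<inter> {j. adj i j}" by auto
  then show ?thesis by (simp add: degree_def of_bool_def[symmetric])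
qed

lemma laplacian_mult_vec_index:
  assumes g: "simple_graph n adj" and i: "i < n"
  shows "(laplacian n adj *\<^sub>v vec n f) $ i = (\<Sum>j<n. if adj i j then f i - f j else 0)"
proof -
  have "(laplacian n adj *\<^sub>v vec n f) $ i = (\<Sum>j<n. laplacian n adj $$ (i, j) * f j)"
    using i by (simp add: scalar_prod_def lessThan_atLeast0)
  also have "\<dots> = (\<Sum>j<n. (if i = j then real (degree n adj i) * f i else 0) - (if adj i j then f j else 0))"
    using g i by (intro sum.cong) (auto simp: laplacian_def simple_graph_def)
  also have "\<dots> = real (degree n adj i) * f i - (\<Sum>j<n. if adj i j then f j else 0)"
    using i by (simp add: sum_subtractf)
  also have "\<dots> = (\<Sum>j<n. if adj i j then f i - f j else 0)"
    by (simp add: degree_eq_sum sum_distrib_right sum_subtractf[symmetric] if_distrib[of "\<lambda>x. x * f i"]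
        cong: if_cong) (rule sum.cong; auto)
  finally show ?thesis .
qed

lemma laplacian_quadratic_form:
  assumes g: "simple_graph n adj"
  shows "vec n f \<bullet> (laplacian n adj *\<^sub>v vec n f) = laplacian_form n adj f"
proof -
  have sym: "\<And>i j. adj i j \<Longrightarrow> adj j i" using g by (simp add: simple_graph_def)
  define T where "T = (\<Sum>i<n. \<Sum>j<n. if adj i j then f i * (f i - f j) else 0)"
  have "vec n f \<bullet> (laplacian n adj *\<^sub>v vec n f) = (\<Sum>i<n. f i * (laplacian n adj *\<^sub>v vec n f) $ i)"
    unfolding scalar_prod_def lessThan_atLeast0 by (simp del: index_mult_mat_vec)
  also have "\<dots> = T"
    unfolding T_def
    by (intro sum.cong) (simp_all add: laplacian_mult_vec_index[OF g] sum_distrib_left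
        if_distrib[of "\<lambda>y. f _ * y"] cong: if_cong del: index_mult_mat_vec)
  finally have quad: "vec n f \<bullet> (laplacian n adj *\<^sub>v vec n f) = T" .
  have "T = (\<Sum>i<n. \<Sum>j<n. if adj i j then f j * (f j - f i) else 0)"
    unfolding T_def by (subst sum.swap) (auto intro!: sum.cong dest: sym)
  then have "2 * T = T + (\<Sum>i<n. \<Sum>j<n. if adj i j then f j * (f j - f i) else 0)"
    by simp
  also have "\<dots> = (\<Sum>i<n. \<Sum>j<n. if adj i j then (f i - f j)\<^sup>2 else 0)"
    unfolding T_def sum.distrib[symmetric]
    by (intro sum.cong refl) (auto simp: power2_eq_square algebra_simps)
  finally show ?thesis
    unfolding quad laplacian_form_def by simp
qed

lemma rayleigh_bound_sum_zero_of_orthogonal: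
  fixes c x :: "nat \<Rightarrow> real"
  assumes mu: "0 < \<mu>" and n: "0 < n"
    and orth: "\<And>f. (\<Sum>i<n. c i * f i) = 0 \<Longrightarrow> \<mu> * (\<Sum>i<n. (f i)\<^sup>2) \<le> laplacian_form n adj f"
    and x: "(\<Sum>i<n. x i) = 0"
  shows "\<mu> * (\<Sum>i<n. (x i)\<^sup>2) \<le> laplacian_form n adj x"
proof -
  define B where "B = (\<Sum>i<n. c i)"
  have "B \<noteq> 0"
  proof
    assume "B = 0"
    then have "\<mu> * real n \<le> laplacian_form n adj (\<lambda>_. 1)"
      using orth[of "\<lambda>_. 1"] by (simp add: B_def)
    also have "laplacian_form n adj (\<lambda>_. 1) = 0" by (simp add: laplacian_form_def cong: if_cong)
    finally show False using mu n by (simp add: mult_le_0_iff)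
  qed
  \<comment> \<open>The form ignores additive constants, and \<open>a - B x\<close> is orthogonal to \<open>c\<close>.\<close>
  define a where "a = (\<Sum>i<n. c i * x i)"
  define f where "f = (\<lambda>i. a - B * x i)"
  have "(\<Sum>i<n. c i * f i) = (\<Sum>i<n. a * c i - B * (c i * x i))"
    by (simp add: f_def algebra_simps)
  also have "\<dots> = 0"
    by (simp add: sum_subtractf sum_distrib_left[symmetric] a_def B_def)
  finally have "\<mu> * (\<Sum>i<n. (f i)\<^sup>2) \<le> B\<^sup>2 * laplacian_form n adj x"
    using orth[of f] laplacian_form_affine[of n adj a "- B" x] by (simp add: f_def)
  moreover have "(\<Sum>i<n. (f i)\<^sup>2) = (\<Sum>i<n. a\<^sup>2 - 2 * a * B * x i + B\<^sup>2 * (x i)\<^sup>2)"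
    by (simp add: f_def power2_eq_square algebra_simps)
  then have "(\<Sum>i<n. (f i)\<^sup>2) = real n * a\<^sup>2 + B\<^sup>2 * (\<Sum>i<n. (x i)\<^sup>2)"
    using x by (simp add: sum.distrib sum_subtractf sum_distrib_left[symmetric])
  moreover have "0 \<le> \<mu> * (real n * a\<^sup>2)" using mu by simp
  ultimately have "B\<^sup>2 * (\<mu> * (\<Sum>i<n. (x i)\<^sup>2)) \<le> B\<^sup>2 * laplacian_form n adj x"
    by (simp add: algebra_simps)
  then show ?thesis using \<open>B \<noteq> 0\<close> by simp
qed

lemma laplacian_form_vec:
  assumes "simple_graph n adj" and "u \<in> carrier_vec n"
  shows "u \<bullet> (laplacian n adj *\<^sub>v u) = laplacian_form n adj (\<lambda>i. u $ i)"
proof -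
  have "vec n (\<lambda>i. u $ i) = u" using assms(2) by (intro eq_vecI) auto
  then show ?thesis using laplacian_quadratic_form[OF assms(1), of "\<lambda>i. u $ i"] by simp
qed

lemma laplacian_sorted_eigenvalues:
  assumes "simple_graph n adj"
  obtains P where "orthonormal_mat n P"
    and "length (sorted_eigenvalues (laplacian n adj)) = n"
    and "sorted (sorted_eigenvalues (laplacian n adj))"
    and "laplacian n adj = P * mat_diag n ((!) (sorted_eigenvalues (laplacian n adj))) * transpose_mat P"
  using symmetric_real_mat_sorted_eigenvalues[OF laplacian_carrier transpose_laplacian[OF assms]] .

lemma algebraic_connectivity_nonneg:
  assumes g: "simple_graph n adj" and n: "1 < n"
  shows "0 \<le> algebraic_connectivity n adj"
proof -
  obtain P where P: "orthonormal_mat n P"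
    and L: "laplacian n adj = P * mat_diag n ((!) (sorted_eigenvalues (laplacian n adj))) * transpose_mat P"
    using laplacian_sorted_eigenvalues[OF g] by metis
  show ?thesis
    unfolding algebraic_connectivity_def
    by (rule diagonalization_entry_nonneg[OF P L])
      (use n in \<open>simp_all add: laplacian_form_vec[OF g] laplacian_form_nonneg\<close>)
qed

lemma algebraic_connectivity_le_laplacian_form:
  assumes g: "simple_graph n adj" and n: "1 < n" and x: "(\<Sum>i<n. x i) = 0"
  shows "algebraic_connectivity n adj * (\<Sum>i<n. (x i)\<^sup>2) \<le> laplacian_form n adj x"
proof (cases "algebraic_connectivity n adj \<le> 0")
  case True
  then show ?thesis
    using laplacian_form_nonneg[of n adj x] sum_nonneg[of "{..<n}" "\<lambda>i. (x i)\<^sup>2"]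
    by (smt (verit) mult_nonpos_nonneg zero_le_power2)
next
  case False
  let ?L = "laplacian n adj" and ?es = "sorted_eigenvalues (laplacian n adj)"
  obtain P where P: "orthonormal_mat n P" and len: "length ?es = n" and sorted: "sorted ?es"
    and L: "?L = P * mat_diag n ((!) ?es) * transpose_mat P"
    using laplacian_sorted_eigenvalues[OF g] by metis
  have Pc: "P \<in> carrier_mat n n" using P by (simp add: orthonormal_mat_def)
  have orth: "algebraic_connectivity n adj * (\<Sum>i<n. (f i)\<^sup>2) \<le> laplacian_form n adj f"
    if "(\<Sum>i<n. col P 0 $ i * f i) = 0" for f
  proof -
    have "col P 0 \<bullet> vec n f = 0"
      using that Pc by (simp add: scalar_prod_def lessThan_atLeast0)
    with second_diagonal_entry_le_rayleigh[OF P L sorted len n]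
    have "?es ! 1 * (vec n f \<bullet> vec n f) \<le> vec n f \<bullet> (?L *\<^sub>v vec n f)"
      by simp
    then show ?thesis
      unfolding laplacian_quadratic_form[OF g] algebraic_connectivity_def
      by (simp add: scalar_prod_def lessThan_atLeast0 power2_eq_square)
  qed
  have "0 < algebraic_connectivity n adj" using False by simp
  from rayleigh_bound_sum_zero_of_orthogonal[OF this _ orth x] show ?thesis
    using n by simp
qed

section \<open>Strong defensive alliances\<close>

definition boundary_size :: "nat \<Rightarrow> (nat \<Rightarrow> nat \<Rightarrow> bool) \<Rightarrow> nat set \<Rightarrow> nat" where
  "boundary_size n adj S = (\<Sum>v\<in>S. card {u \<in> {0..<n} - S. adj u v})"

lemma strong_defensive_alliance_outside_neighbours:
  assumes g: "simple_graph n adj" and S: "strong_defensive_alliance n adj S" and v: "v \<in> S"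
  shows "card {u \<in> {0..<n} - S. adj u v} \<le> max_degree n adj div 2"
proof -
  have sub: "S \<subseteq> {0..<n}"
    and defends: "card {u \<in> {0..<n} - S. adj u v} \<le> card {u \<in> S. adj u v}"
    using S v by (auto simp: strong_defensive_alliance_def)
  have "{u \<in> S. adj u v} \<union> {u \<in> {0..<n} - S. adj u v} = {u. u < n \<and> adj v u}"
    using sub g by (auto simp: simple_graph_def)
  moreover have "finite {u \<in> S. adj u v}"
    using sub by (auto intro: finite_subset)
  ultimately have "card {u \<in> S. adj u v} + card {u \<in> {0..<n} - S. adj u v} = degree n adj v"
    by (simp add: degree_def card_Un_disjoint[symmetric] Int_def)
  moreover have "degree n adj v \<le> max_degree n adj"
    using sub v by (auto simp: max_degree_def intro: Max_ge)
  ultimately show ?thesis using defends by linarith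
qed

lemma boundary_size_le:
  assumes "simple_graph n adj" and "strong_defensive_alliance n adj S"
  shows "boundary_size n adj S \<le> card S * (max_degree n adj div 2)"
  unfolding boundary_size_def
  using sum_bounded_above[of S _ "max_degree n adj div 2"]
    strong_defensive_alliance_outside_neighbours[OF assms] by simp

definition centered_indicator :: "nat \<Rightarrow> nat set \<Rightarrow> nat \<Rightarrow> real" where
  "centered_indicator n S i = (if i \<in> S then real n - real (card S) else - real (card S))"

lemma sum_centered_indicator:
  assumes sub: "S \<subseteq> {0..<n}"
  shows "(\<Sum>i<n. centered_indicator n S i) = 0"
    and "(\<Sum>i<n. (centered_indicator n S i)\<^sup>2) = real (card S) * (real n - real (card S)) * real n"
proof -
  have fin: "finite S" using sub finite_subset by blast
  have S: "{..<n} \<inter> S = S" using sub by auto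
  have compl: "card ({..<n} - S) = n - card S" and le: "card S \<le> n"
    using sub fin card_mono[of "{..<n}" S] by (auto simp: card_Diff_subset lessThan_atLeast0)
  show "(\<Sum>i<n. centered_indicator n S i) = 0"
    using le by (simp add: centered_indicator_def sum.If_cases S compl Diff_eq[symmetric] of_nat_diff
        algebra_simps)
  have "(\<Sum>i<n. (centered_indicator n S i)\<^sup>2)
      = (\<Sum>i<n. if i \<in> S then (real n - real (card S))\<^sup>2 else (real (card S))\<^sup>2)"
    by (intro sum.cong) (auto simp: centered_indicator_def)
  also have "\<dots> = real (card S) * (real n - real (card S)) * real n"
    using le by (simp add: sum.If_cases S compl Diff_eq[symmetric] of_nat_diff power2_eq_square
        algebra_simps)
  finally show "(\<Sum>i<n. (centered_indicator n S i)\<^sup>2) = real (card S) * (real n - real (card S)) * real n" .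
qed

lemma laplacian_form_centered_indicator:
  assumes g: "simple_graph n adj" and sub: "S \<subseteq> {0..<n}"
  shows "laplacian_form n adj (centered_indicator n S) = (real n)\<^sup>2 * real (boundary_size n adj S)"
proof -
  let ?x = "centered_indicator n S"
  let ?c = "\<lambda>i j. of_bool (adj i j \<and> i \<notin> S \<and> j \<in> S) :: real"
  have sym: "\<And>i j. adj i j \<Longrightarrow> adj j i" using g by (simp add: simple_graph_def)
  have edge: "(if adj i j then (?x i - ?x j)\<^sup>2 else 0) = (real n)\<^sup>2 * (?c i j + ?c j i)" for i j
    using sym[of i j] sym[of j i] by (auto simp: centered_indicator_def power2_eq_square algebra_simps)
  have column: "(\<Sum>i<n. ?c i j) = (if j \<in> S then real (card {u \<in> {0..<n} - S. adj u j}) else 0)" for j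
  proof -
    have "{..<n} \<inter> {i. adj i j \<and> i \<notin> S} = {u \<in> {0..<n} - S. adj u j}" by auto
    then show ?thesis by (simp add: of_bool_def[symmetric])
  qed
  have "(\<Sum>i<n. \<Sum>j<n. ?c i j) = (\<Sum>j<n. \<Sum>i<n. ?c i j)"
    by (rule sum.swap)
  also have "\<dots> = (\<Sum>j<n. if j \<in> S then real (card {u \<in> {0..<n} - S. adj u j}) else 0)"
    by (simp only: column)
  also have "\<dots> = real (boundary_size n adj S)"
    using sub by (simp add: boundary_size_def sum.inter_restrict[symmetric] Int_absorb1 Int_absorb2
        lessThan_atLeast0)
  finally have cut: "(\<Sum>i<n. \<Sum>j<n. ?c i j) = real (boundary_size n adj S)" .
  have "(\<Sum>i<n. \<Sum>j<n. if adj i j then (?x i - ?x j)\<^sup>2 else 0)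
      = (real n)\<^sup>2 * ((\<Sum>i<n. \<Sum>j<n. ?c i j) + (\<Sum>i<n. \<Sum>j<n. ?c j i))"
    unfolding edge by (simp only: sum_distrib_left sum.distrib distrib_left)
  also have "(\<Sum>i<n. \<Sum>j<n. ?c j i) = (\<Sum>i<n. \<Sum>j<n. ?c i j)"
    by (rule sum.swap)
  finally show ?thesis
    unfolding laplacian_form_def cut by simp
qed

lemma strong_defensive_alliance_card_bound:
  assumes g: "simple_graph n adj" and n: "1 < n" and S: "strong_defensive_alliance n adj S"
  shows "algebraic_connectivity n adj * (real n - real (card S)) \<le> real n * real (max_degree n adj div 2)"
proof -
  let ?\<mu> = "algebraic_connectivity n adj" and ?s = "real (card S)" and ?k = "real (max_degree n adj div 2)"
  have sub: "S \<subseteq> {0..<n}" and "S \<noteq> {}" using S by (auto simp: strong_defensive_alliance_def)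
  then have s: "0 < ?s" using finite_subset by fastforce
  have "?\<mu> * (?s * (real n - ?s) * real n) \<le> (real n)\<^sup>2 * real (boundary_size n adj S)"
    using algebraic_connectivity_le_laplacian_form[OF g n sum_centered_indicator(1)[OF sub]]
    by (simp add: sum_centered_indicator(2)[OF sub] laplacian_form_centered_indicator[OF g sub])
  also have "\<dots> \<le> (real n)\<^sup>2 * (?s * ?k)"
    using boundary_size_le[OF g S] by (intro mult_left_mono) (simp_all flip: of_nat_mult)
  finally have "(?\<mu> * (real n - ?s)) * (?s * real n) \<le> (real n * ?k) * (?s * real n)"
    by (simp add: power2_eq_square algebra_simps)
  then show ?thesis using s n by (simp add: mult.commute)
qed

lemma strong_defensive_alliance_number_attained:
  assumes "0 < n"
  obtains S where "strong_defensive_alliance n adj S"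
    and "card S = strong_defensive_alliance_number n adj"
proof -
  let ?C = "{card S | S. strong_defensive_alliance n adj S}"
  have "strong_defensive_alliance n adj {0..<n}"
    using assms by (auto simp: strong_defensive_alliance_def)
  then have "?C \<noteq> {}" by blast
  moreover have "?C \<subseteq> {..n}"
    by (auto simp: strong_defensive_alliance_def dest: card_mono[rotated])
  then have "finite ?C" by (rule finite_subset) simp
  ultimately have "Min ?C \<in> ?C" by (rule Min_in[rotated])
  then show ?thesis
    using that by (auto simp: strong_defensive_alliance_number_def)
qed

theorem theorem2:
  fixes n :: nat and adj :: "nat \<Rightarrow> nat \<Rightarrow> bool"
  assumes "simple_graph n adj"
    and "connected_graph n adj"
    and "n \<ge> 2"
  shows "real (strong_defensive_alliance_number n adj) \<ge>
    real_of_int \<lceil>real n * (algebraic_connectivity n adj - real (max_degree n adj div 2))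
                 / algebraic_connectivity n adj\<rceil>"
proof -
  let ?\<mu> = "algebraic_connectivity n adj" and ?k = "real (max_degree n adj div 2)"
  have g: "simple_graph n adj" and n: "1 < n" using assms by auto
  obtain S where S: "strong_defensive_alliance n adj S"
    and card: "card S = strong_defensive_alliance_number n adj"
    using strong_defensive_alliance_number_attained[of n adj] n by auto
  have "real n * (?\<mu> - ?k) / ?\<mu> \<le> real (card S)"
  proof (cases "?\<mu> = 0")
    case False
    then have "0 < ?\<mu>" using algebraic_connectivity_nonneg[OF g n] by simp
    then show ?thesis
      using strong_defensive_alliance_card_bound[OF g n S] by (simp add: field_simps)
  qed simp \<comment> \<open>for \<open>\<mu> = 0\<close> the quotient is \<open>x / 0 = 0\<close>\<close>
  then have "\<lceil>real n * (?\<mu> - ?k) / ?\<mu>\<rceil> \<le> int (card S)"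
    by (simp add: ceiling_le_iff)
  then show ?thesis
    unfolding card[symmetric] by linarith
qed

end
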